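(* Let $R>q>1$ and $f\in H(\mathbb{D}_R)$ with $f(z)=\sum_{m=0}^\infty a_mz^m$. Then for $|z|<R/q^2$, \[L_q(f;z)=\sum_{m=2}^\infty a_m\left(q\sum_{i=1}^{m-1}[i]_q+\sum_{i=1}^{m-1}[i]_{q^{-1}}\right)z^{m-1}(1-z).\]
   Context: For an integer $i\ge0$ and $p>0$, $[i]_p=1+p+\dots+p^{i-1}$. $\mathbb{D}_R=\{|z|<R\}$, $H(\mathbb{D}_R)$ the analytic functions on it. For $p>0$, $p\ne1$, $D_pf(z)=\frac{f(pz)-f(z)}{(p-1)z}$ for $z\ne0$ and $D_pf(0)=f'(0)$. For $|z|<R/q^2$, $L_q(f;z)=\frac{(1-z)\,q\,(D_qf(z)-D_{q^{-1}}f(z))}{q-1}$. *)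

theory Defs
  imports "HOL-Complex_Analysis.Complex_Analysis"
begin

definition qint :: "nat \<Rightarrow> real \<Rightarrow> real" where
  "qint i p = (\<Sum>k<i. p ^ k)"

definition Dp :: "real \<Rightarrow> (complex \<Rightarrow> complex) \<Rightarrow> complex \<Rightarrow> complex" where
  "Dp p f z = (if z = 0 then deriv f 0
               else (f (complex_of_real p * z) - f z) / ((complex_of_real p - 1) * z))"

definition Lq :: "real \<Rightarrow> (complex \<Rightarrow> complex) \<Rightarrow> complex \<Rightarrow> complex" where
  "Lq q f z = (1 - z) * complex_of_real q * (Dp q f z - Dp (inverse q) f z)
              / (complex_of_real q - 1)"

end

theory Submission
  imports Defs
begin

text \<open>\<open>D\<^sub>p\<close> maps \<open>z\<^sup>m\<close> to \<open>[m]\<^sub>p z\<^sup>m\<^sup>-\<^sup>1\<close>, so on the power series \<open>L\<^sub>q\<close> acts termwise,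
  multiplying \<open>a\<^sub>m z\<^sup>m\<close> by \<open>(1 - z) q ([m]\<^sub>q - [m]\<^bsub>q\<^sup>-\<^sup>1\<^esub>) / ((q - 1) z)\<close>. This coefficient
  vanishes for \<open>m \<le> 1\<close>, and for \<open>m \<ge> 2\<close> a telescoping induction on the geometric sums
  \<open>(q - 1)[n]\<^sub>q = q\<^sup>n - 1\<close> and \<open>(q - 1)[n]\<^bsub>q\<^sup>-\<^sup>1\<^esub> = q - q\<^sup>1\<^sup>-\<^sup>n\<close> turns it into the stated one.\<close>

lemma qint_0 [simp]: "qint 0 p = 0"
  by (simp add: qint_def)

lemma qint_Suc: "qint (Suc n) p = qint n p + p ^ n"
  by (simp add: qint_def)

lemma qint_geometric: "(p - 1) * qint n p = p ^ n - 1"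
  by (induction n) (simp_all add: qint_Suc algebra_simps)

lemma qint_inverse_geometric:
  assumes "q \<noteq> 0"
  shows "(q - 1) * qint n (inverse q) = q * (1 - inverse q ^ n)"
proof -
  have "(q - 1) * qint n (inverse q) = - q * ((inverse q - 1) * qint n (inverse q))"
    using assms by (simp add: field_simps)
  also have "\<dots> = q * (1 - inverse q ^ n)"
    unfolding qint_geometric by (simp add: algebra_simps)
  finally show ?thesis .
qed

lemma qint_difference_eq_sum:
  fixes q :: real
  assumes "q \<noteq> 0"
  shows "q * (qint (n + 1) q - qint (n + 1) (inverse q)) =
         (q - 1) * (q * (\<Sum>i=1..n. qint i q) + (\<Sum>i=1..n. qint i (inverse q)))"
proof (induction n)
  case 0
  show ?case by (simp add: qint_def)
next
  case (Suc n)
  have step: "(q - 1) * (q * qint (Suc n) q + qint (Suc n) (inverse q))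
              = q * (q ^ Suc n - inverse q ^ Suc n)"
  proof -
    have "(q - 1) * (q * qint (Suc n) q + qint (Suc n) (inverse q))
          = q * ((q - 1) * qint (Suc n) q) + (q - 1) * qint (Suc n) (inverse q)"
      by (simp add: algebra_simps)
    then show ?thesis
      unfolding qint_geometric qint_inverse_geometric[OF assms] by (simp add: algebra_simps)
  qed
  have "q * (qint (Suc n + 1) q - qint (Suc n + 1) (inverse q))
        = q * (qint (n + 1) q - qint (n + 1) (inverse q)) + q * (q ^ Suc n - inverse q ^ Suc n)"
    by (simp add: qint_Suc[of "Suc n"] algebra_simps)
  also have "\<dots> = (q - 1) * (q * (\<Sum>i=1..Suc n. qint i q) + (\<Sum>i=1..Suc n. qint i (inverse q)))"
  proof -
    have split: "(\<Sum>i=1..Suc n. g i) = (\<Sum>i=1..n. g i) + g (Suc n)" for g :: "nat \<Rightarrow> real"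
      by simp
    show ?thesis
      unfolding Suc.IH step[symmetric] split by (simp only: ring_distribs)
  qed
  finally show ?case .
qed

lemma difference_quotient_power:
  fixes p :: real and z :: complex
  assumes "p \<noteq> 1" "z \<noteq> 0"
  shows "((of_real p * z) ^ m - z ^ m) / ((of_real p - 1) * z) = of_real (qint m p) * z ^ (m - 1)"
proof (cases m)
  case 0
  then show ?thesis by simp
next
  case (Suc k)
  have "(of_real p * z) ^ m - z ^ m = z ^ m * (of_real p ^ m - 1)"
    by (simp add: power_mult_distrib algebra_simps)
  also have "\<dots> = z ^ m * ((of_real p - 1) * of_real (qint m p))"
    by (metis qint_geometric of_real_1 of_real_diff of_real_mult of_real_power)
  also have "\<dots> = (of_real p - 1) * z * (of_real (qint m p) * z ^ k)"
    by (simp add: Suc algebra_simps)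
  finally have "(of_real p * z) ^ m - z ^ m = (of_real p - 1) * z * (of_real (qint m p) * z ^ k)" .
  then show ?thesis
    using assms Suc by (simp add: field_simps)
qed

lemma Dp_sums:
  fixes p :: real
  assumes "p \<noteq> 1" "z \<noteq> 0"
    and "(\<lambda>m. a m * z ^ m) sums f z"
    and "(\<lambda>m. a m * (of_real p * z) ^ m) sums f (of_real p * z)"
  shows "(\<lambda>m. a m * of_real (qint m p) * z ^ (m - 1)) sums Dp p f z"
proof -
  have "(\<lambda>m. (a m * (of_real p * z) ^ m - a m * z ^ m) / ((of_real p - 1) * z)) sums Dp p f z"
    unfolding Dp_def using assms(2) sums_divide[OF sums_diff[OF assms(4,3)]] by simp
  moreover have "(a m * (of_real p * z) ^ m - a m * z ^ m) / ((of_real p - 1) * z)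
                 = a m * of_real (qint m p) * z ^ (m - 1)" for m
  proof -
    have "(a m * (of_real p * z) ^ m - a m * z ^ m) / ((of_real p - 1) * z)
          = a m * (((of_real p * z) ^ m - z ^ m) / ((of_real p - 1) * z))"
      by (simp add: right_diff_distrib)
    then show ?thesis
      by (simp add: difference_quotient_power[OF assms(1,2)])
  qed
  ultimately show ?thesis by simp
qed

lemma Lq_sums:
  fixes q :: real
  assumes "q \<noteq> 1" "z \<noteq> 0"
    and "(\<lambda>m. a m * z ^ m) sums f z"
    and "(\<lambda>m. a m * (of_real q * z) ^ m) sums f (of_real q * z)"
    and "(\<lambda>m. a m * (of_real (inverse q) * z) ^ m) sums f (of_real (inverse q) * z)"
  shows "(\<lambda>m. a m * of_real (q * (qint m q - qint m (inverse q)) / (q - 1)) * z ^ (m - 1) * (1 - z))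
           sums Lq q f z"
proof -
  have "inverse q \<noteq> 1"
    using assms(1) by (metis inverse_1 inverse_inverse_eq)
  then have "(\<lambda>m. (1 - z) * of_real q * (a m * of_real (qint m q) * z ^ (m - 1)
                 - a m * of_real (qint m (inverse q)) * z ^ (m - 1)) / (of_real q - 1)) sums Lq q f z"
    unfolding Lq_def using assms
    by (intro sums_divide sums_mult sums_diff Dp_sums) auto
  moreover have "(\<lambda>m. (1 - z) * of_real q * (a m * of_real (qint m q) * z ^ (m - 1)
                   - a m * of_real (qint m (inverse q)) * z ^ (m - 1)) / (of_real q - 1))
                 = (\<lambda>m. a m * of_real (q * (qint m q - qint m (inverse q)) / (q - 1)) * z ^ (m - 1) * (1 - z))"
    using \<open>q \<noteq> 1\<close> by (simp add: field_simps)
  ultimately show ?thesis by (simp only:)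
qed

lemma norm_scalings_less:
  fixes q R :: real and z :: complex
  assumes "q > 1" "norm z < R / q\<^sup>2"
  shows "norm (of_real q * z) < R" "norm z < R" "norm (of_real (inverse q) * z) < R"
proof -
  have "norm z * q \<le> norm z * q\<^sup>2"
    using assms(1) by (intro mult_left_mono) (auto simp: power2_eq_square)
  then show qz: "norm (of_real q * z) < R"
    using assms by (simp add: norm_mult field_simps)
  have "norm z \<le> norm (of_real q * z)"
    using assms(1) mult_right_mono[of 1 q "norm z"] by (simp add: norm_mult)
  with qz show z: "norm z < R"
    by simp
  have "inverse q * norm z \<le> norm z"
    using assms(1) by (simp add: mult_left_le_one_le inverse_le_1_iff)
  with z show "norm (of_real (inverse q) * z) < R"
    using assms(1) by (simp add: norm_mult norm_inverse)
qed

theorem mainTheorem8: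
  fixes R q :: real and f :: "complex \<Rightarrow> complex" and a :: "nat \<Rightarrow> complex" and z :: complex
  assumes "R > q" and "q > 1"
    and "f holomorphic_on ball 0 R"
    and "\<And>w. w \<in> ball 0 R \<Longrightarrow> (\<lambda>m. a m * w ^ m) sums f w"
    and "norm z < R / q\<^sup>2"
  shows "(\<lambda>n. a (n + 2) * complex_of_real (q * (\<Sum>i=1..n+1. qint i q) + (\<Sum>i=1..n+1. qint i (inverse q)))
              * z ^ (n + 1) * (1 - z)) sums Lq q f z"
proof (cases "z = 0")
  case True
  then show ?thesis by (simp add: Lq_def Dp_def)
next
  case False
  define c where "c m = q * (qint m q - qint m (inverse q)) / (q - 1)" for m
  define T where "T m = a m * of_real (c m) * z ^ (m - 1) * (1 - z)" for m
  have "T sums Lq q f z"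
    unfolding T_def c_def using \<open>q > 1\<close> False norm_scalings_less[OF \<open>q > 1\<close> assms(5)]
    by (intro Lq_sums assms(4)) auto
  moreover have "T m = 0" if "m < 2" for m
    using that by (auto simp: T_def c_def qint_def less_2_cases_iff)
  ultimately have "(\<lambda>n. T (n + 2)) sums Lq q f z"
    by (subst sums_zero_iff_shift[of 2 T]) auto
  moreover have "c (n + 2) = q * (\<Sum>i=1..n+1. qint i q) + (\<Sum>i=1..n+1. qint i (inverse q))" for n
    using qint_difference_eq_sum[of q "n + 1"] \<open>q > 1\<close> unfolding c_def
    by (simp add: divide_simps del: sum.cl_ivl_Suc)
  then have "T (n + 2) = a (n + 2) * of_real (q * (\<Sum>i=1..n+1. qint i q) + (\<Sum>i=1..n+1. qint i (inverse q)))
                         * z ^ (n + 1) * (1 - z)" for n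
    unfolding T_def by (metis add_diff_cancel_right' nat_1_add_1 add.assoc)
  ultimately show ?thesis
    by simp
qed

end
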